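(* Let $(N,+,* )$ be a nilpotent ring with adjoint operation $x\circ y=x+y+x*y$, let $S$ be a subring and $I$ a two-sided ideal of $N$ with $S\cap I=\{0\}$ and $N=S+I$. Then every $x\in N$ can be written uniquely as $x=s\circ i$ with $s\in S$, $i\in I$; define $x\bullet y=s\circ y\circ i$, so that $(N,+,\bullet)$ is a left brace, and let $r(x,y)=(\sigma_x(y),\tau_y(x))$ be its Yang–Baxter map. Let $X\subseteq N$ be such that $(X,r)$ is a solution of the set-theoretic Yang–Baxter equation. Let $J\subseteq I\cap X$ be a two-sided ideal of the ring $N$ and let $k:X\to X$ satisfy $k(x)-x\in J$ for all $x\in X$. Then $\tau_{k(y)}(x)-\tau_y(x)\in J$ for all $x,y\in X$. *)

theory Defs
  imports Main
begin

text \<open>A (not necessarily unital, not necessarily commutative) ring is modelled by the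
  type class ring; the whole type plays the role of N.\<close>

fun nprod :: "'a::ring list \<Rightarrow> 'a" where
  "nprod [] = 0"
| "nprod [x] = x"
| "nprod (x # y # xs) = x * nprod (y # xs)"

definition nilpotent_ring :: "'a::ring itself \<Rightarrow> bool" where
  "nilpotent_ring _ \<longleftrightarrow> (\<exists>n>0. \<forall>xs::'a list. length xs = n \<longrightarrow> nprod xs = 0)"

definition subring :: "'a::ring set \<Rightarrow> bool" where
  "subring S \<longleftrightarrow> 0 \<in> S \<and> (\<forall>x\<in>S. \<forall>y\<in>S. x + y \<in> S \<and> x - y \<in> S \<and> x * y \<in> S)"

definition two_sided_ideal :: "'a::ring set \<Rightarrow> bool" where
  "two_sided_ideal I \<longleftrightarrow> 0 \<in> I \<and> (\<forall>x\<in>I. \<forall>y\<in>I. x + y \<in> I \<and> x - y \<in> I)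
     \<and> (\<forall>x\<in>I. \<forall>n. n * x \<in> I \<and> x * n \<in> I)"

definition adj :: "'a::ring \<Rightarrow> 'a \<Rightarrow> 'a" (infixl "\<circ>\<^sub>a" 70) where
  "x \<circ>\<^sub>a y = x + y + x * y"

definition decomp :: "'a::ring set \<Rightarrow> 'a set \<Rightarrow> 'a \<Rightarrow> 'a \<times> 'a" where
  "decomp S I x = (THE p. fst p \<in> S \<and> snd p \<in> I \<and> x = fst p \<circ>\<^sub>a snd p)"

definition bul :: "'a::ring set \<Rightarrow> 'a set \<Rightarrow> 'a \<Rightarrow> 'a \<Rightarrow> 'a" where
  "bul S I x y = (fst (decomp S I x) \<circ>\<^sub>a y) \<circ>\<^sub>a snd (decomp S I x)"

definition binv :: "'a::ring set \<Rightarrow> 'a set \<Rightarrow> 'a \<Rightarrow> 'a" where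
  "binv S I x = (THE y. bul S I x y = 0)"

definition sigma :: "'a::ring set \<Rightarrow> 'a set \<Rightarrow> 'a \<Rightarrow> 'a \<Rightarrow> 'a" where
  "sigma S I x y = bul S I x y - x"

definition tau :: "'a::ring set \<Rightarrow> 'a set \<Rightarrow> 'a \<Rightarrow> 'a \<Rightarrow> 'a" where
  "tau S I y x = bul S I (binv S I (sigma S I x y)) (bul S I x y)"

definition ybmap :: "'a::ring set \<Rightarrow> 'a set \<Rightarrow> 'a \<times> 'a \<Rightarrow> 'a \<times> 'a" where
  "ybmap S I p = (sigma S I (fst p) (snd p), tau S I (snd p) (fst p))"

definition ybe_solution :: "'b set \<Rightarrow> ('b \<times> 'b \<Rightarrow> 'b \<times> 'b) \<Rightarrow> bool" where
  "ybe_solution X r \<longleftrightarrow>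
     (\<forall>x\<in>X. \<forall>y\<in>X. r (x, y) \<in> X \<times> X) \<and>
     (\<forall>x\<in>X. \<forall>y\<in>X. \<forall>z\<in>X.
        let r12 = (\<lambda>(a, b, c). (fst (r (a, b)), snd (r (a, b)), c));
            r23 = (\<lambda>(a, b, c). (a, fst (r (b, c)), snd (r (b, c))))
        in r12 (r23 (r12 (x, y, z))) = r23 (r12 (r23 (x, y, z))))"

end

theory Submission
  imports Defs
begin

text \<open>In a nilpotent ring the adjoint operation makes N a group, with quasi-inverse
  -x + x^2 - x^3 + ... (a finite sum).  Since J is an ideal contained in I, changing an
  element by something in J leaves the S-component of its decomposition s \<circ> i unchanged
  and changes the I-component by an element of J.  Hence the brace product, its inverse,
  sigma and tau all respect congruence modulo J.\<close>

lemma adj_assoc: "((x::'a::ring) \<circ>\<^sub>a y) \<circ>\<^sub>a z = x \<circ>\<^sub>a (y \<circ>\<^sub>a z)"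
  unfolding adj_def by (simp add: algebra_simps)

lemma adj_0 [simp]: "(x::'a::ring) \<circ>\<^sub>a 0 = x" "0 \<circ>\<^sub>a x = x"
  unfolding adj_def by simp_all

lemma adj_geometric_sum:
  fixes x :: "'a::ring"
  defines "q \<equiv> \<lambda>k. nprod (replicate k (- x))"
  shows "x \<circ>\<^sub>a (\<Sum>k<m. q (Suc k)) = - q (Suc m)"
proof (induction m)
  case 0
  then show ?case by (simp add: q_def)
next
  case (Suc m)
  have "x \<circ>\<^sub>a (\<Sum>k<Suc m. q (Suc k)) = (x \<circ>\<^sub>a (\<Sum>k<m. q (Suc k))) + q (Suc m) + x * q (Suc m)"
    unfolding adj_def by (simp add: algebra_simps)
  also have "\<dots> = - q (Suc (Suc m))"
    using Suc by (simp add: q_def)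
  finally show ?case .
qed

lemma nilpotent_adj_right_inverse:
  assumes "nilpotent_ring TYPE('a::ring)"
  shows "\<exists>y. (x::'a) \<circ>\<^sub>a y = 0"
proof -
  obtain n where "n > 0" and nil: "\<forall>xs::'a list. length xs = n \<longrightarrow> nprod xs = 0"
    using assms unfolding nilpotent_ring_def by blast
  then obtain m where "n = Suc m" by (cases n) auto
  then have "nprod (replicate (Suc m) (- x)) = 0" using nil by simp
  then show ?thesis using adj_geometric_sum[of x m] by auto
qed

definition adj_inv :: "'a::ring \<Rightarrow> 'a" where
  "adj_inv x = (SOME y. x \<circ>\<^sub>a y = 0)"

context
  assumes nil: "nilpotent_ring TYPE('a::ring)"
begin

lemma adj_inv_right [simp]: "(x::'a) \<circ>\<^sub>a adj_inv x = 0"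
  unfolding adj_inv_def using nilpotent_adj_right_inverse[OF nil, of x] by (rule someI_ex)

lemma adj_inv_left [simp]: "adj_inv (x::'a) \<circ>\<^sub>a x = 0"
proof -
  let ?y = "adj_inv x"
  have "x = x \<circ>\<^sub>a (?y \<circ>\<^sub>a adj_inv ?y)" by simp
  also have "\<dots> = (x \<circ>\<^sub>a ?y) \<circ>\<^sub>a adj_inv ?y" by (rule adj_assoc[symmetric])
  also have "\<dots> = adj_inv ?y" by simp
  finally have "x = adj_inv ?y" .
  then show ?thesis by (metis adj_inv_right)
qed

lemma adj_inv_left_cancel [simp]: "adj_inv (x::'a) \<circ>\<^sub>a (x \<circ>\<^sub>a y) = y"
  by (simp add: adj_assoc[symmetric])

lemma adj_left_cancel: "(x::'a) \<circ>\<^sub>a a = x \<circ>\<^sub>a b \<Longrightarrow> a = b"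
  by (metis adj_inv_left_cancel)

lemma adj_right_cancel: "(a::'a) \<circ>\<^sub>a x = b \<circ>\<^sub>a x \<Longrightarrow> a = b"
  by (metis adj_0(1) adj_assoc adj_inv_right)

end

lemma two_sided_ideal_diff_adj:
  fixes J :: "'a::ring set"
  assumes J: "two_sided_ideal J" and "a - a' \<in> J" "b - b' \<in> J"
  shows "a \<circ>\<^sub>a b - a' \<circ>\<^sub>a b' \<in> J"
proof -
  have "a \<circ>\<^sub>a b - a' \<circ>\<^sub>a b' = (a - a') + (b - b') + ((a - a') * b + a' * (b - b'))"
    unfolding adj_def by (simp add: algebra_simps)
  moreover have "\<dots> \<in> J"
    using J assms(2,3) unfolding two_sided_ideal_def by simp
  ultimately show ?thesis by simp
qed

lemma two_sided_ideal_diff_adj_left: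
  "two_sided_ideal J \<Longrightarrow> b - b' \<in> J \<Longrightarrow> (a::'a::ring) \<circ>\<^sub>a b - a \<circ>\<^sub>a b' \<in> J"
  using two_sided_ideal_diff_adj[of J a a b b'] unfolding two_sided_ideal_def by simp

lemma two_sided_ideal_diff_adj_inv:
  fixes J :: "'a::ring set"
  assumes nil: "nilpotent_ring TYPE('a)" and J: "two_sided_ideal J" and "a - a' \<in> J"
  shows "adj_inv a - adj_inv a' \<in> J"
proof -
  have "a' - a \<in> J"
    using assms(3) J unfolding two_sided_ideal_def by (metis diff_0 minus_diff_eq)
  then have "a' \<circ>\<^sub>a adj_inv a - a \<circ>\<^sub>a adj_inv a \<in> J"
    using two_sided_ideal_diff_adj[OF J] J unfolding two_sided_ideal_def by simp
  then have j: "a' \<circ>\<^sub>a adj_inv a \<in> J" using nil by simp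
  have "adj_inv a' \<circ>\<^sub>a (a' \<circ>\<^sub>a adj_inv a) = adj_inv a" using nil by simp
  then have "adj_inv a - adj_inv a' = (a' \<circ>\<^sub>a adj_inv a) + adj_inv a' * (a' \<circ>\<^sub>a adj_inv a)"
    unfolding adj_def[of "adj_inv a'"] by (simp add: algebra_simps)
  moreover have "\<dots> \<in> J"
    using j J unfolding two_sided_ideal_def by simp
  ultimately show ?thesis by simp
qed

locale nilpotent_exact_factorization =
  fixes S I :: "'a::ring set"
  assumes nilpotent: "nilpotent_ring TYPE('a)"
    and subring: "subring S" and ideal: "two_sided_ideal I"
    and disjoint: "S \<inter> I = {0}" and sum_decomp: "\<forall>x. \<exists>s\<in>S. \<exists>i\<in>I. x = s + i"
begin

lemma factor_eq_if_diff_in_ideal: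
  assumes "s \<in> S" "i \<in> I" "s' \<in> S" "i' \<in> I" "(s \<circ>\<^sub>a i) - (s' \<circ>\<^sub>a i') \<in> I"
  shows "s = s'"
proof -
  have "s - s' = (s \<circ>\<^sub>a i - s' \<circ>\<^sub>a i') - (i + s * i) + (i' + s' * i')"
    unfolding adj_def by (simp add: algebra_simps)
  moreover have "\<dots> \<in> I"
    using ideal assms unfolding two_sided_ideal_def by simp
  moreover have "s - s' \<in> S" using subring assms unfolding subring_def by simp
  ultimately show "s = s'" using disjoint by (metis IntI diff_eq_diff_eq diff_self singletonD)
qed

lemma adj_factorization_exists: "\<exists>s\<in>S. \<exists>i\<in>I. x = s \<circ>\<^sub>a i"
proof -
  obtain s i0 where si: "s \<in> S" "i0 \<in> I" "x = s + i0" using sum_decomp by blast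
  have "adj_inv s \<circ>\<^sub>a x = (adj_inv s \<circ>\<^sub>a s) + i0 + adj_inv s * i0"
    unfolding si(3) adj_def by (simp add: algebra_simps)
  then have "adj_inv s \<circ>\<^sub>a x = i0 + adj_inv s * i0" using nilpotent by simp
  then have "adj_inv s \<circ>\<^sub>a x \<in> I" using ideal si(2) unfolding two_sided_ideal_def by auto
  moreover have "x = s \<circ>\<^sub>a (adj_inv s \<circ>\<^sub>a x)"
    using nilpotent by (simp add: adj_assoc[symmetric])
  ultimately show ?thesis using si(1) by blast
qed

lemma decomp_factorization:
  "fst (decomp S I x) \<in> S" "snd (decomp S I x) \<in> I"
  "fst (decomp S I x) \<circ>\<^sub>a snd (decomp S I x) = x"
proof -
  let ?P = "\<lambda>p. fst p \<in> S \<and> snd p \<in> I \<and> x = fst p \<circ>\<^sub>a snd p"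
  obtain s i where ex: "?P (s, i)" using adj_factorization_exists[of x] by auto
  have unique: "p = (s, i)" if "?P p" for p
  proof -
    have "fst p = s"
      using factor_eq_if_diff_in_ideal[of "fst p" "snd p" s i] that ex ideal
      unfolding two_sided_ideal_def by auto
    moreover from this have "snd p = i"
      using adj_left_cancel[OF nilpotent, of s "snd p" i] that ex by simp
    ultimately show ?thesis by (simp add: prod_eq_iff)
  qed
  have "?P (THE p. ?P p)" using ex unique by (rule theI)
  then show "fst (decomp S I x) \<in> S" "snd (decomp S I x) \<in> I"
    "fst (decomp S I x) \<circ>\<^sub>a snd (decomp S I x) = x"
    unfolding decomp_def by auto
qed

lemma binv_eq: "binv S I a = adj_inv (fst (decomp S I a)) \<circ>\<^sub>a adj_inv (snd (decomp S I a))"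
  unfolding binv_def
proof (rule the_equality)
  let ?s = "fst (decomp S I a)" and ?i = "snd (decomp S I a)"
  show "bul S I a (adj_inv ?s \<circ>\<^sub>a adj_inv ?i) = 0"
    unfolding bul_def using nilpotent by (simp add: adj_assoc[symmetric])
  fix y assume "bul S I a y = 0"
  then have "(?s \<circ>\<^sub>a y) \<circ>\<^sub>a ?i = adj_inv ?i \<circ>\<^sub>a ?i" unfolding bul_def using nilpotent by simp
  then have "?s \<circ>\<^sub>a y = adj_inv ?i" by (rule adj_right_cancel[OF nilpotent])
  then show "y = adj_inv ?s \<circ>\<^sub>a adj_inv ?i"
    using adj_inv_left_cancel[OF nilpotent, of ?s y] by simp
qed

context
  fixes J :: "'a set"
  assumes J: "two_sided_ideal J" and J_sub: "J \<subseteq> I"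
begin

lemma decomp_cong:
  assumes "a - a' \<in> J"
  shows "fst (decomp S I a) = fst (decomp S I a')"
    and "snd (decomp S I a) - snd (decomp S I a') \<in> J"
proof -
  let ?s = "fst (decomp S I a)" and ?s' = "fst (decomp S I a')"
  have "a - a' \<in> I" using assms J_sub by auto
  then show ss: "?s = ?s'"
    by (intro factor_eq_if_diff_in_ideal[OF decomp_factorization(1,2)[of a]
        decomp_factorization(1,2)[of a']]) (simp add: decomp_factorization(3))
  have "snd (decomp S I x) = adj_inv ?s \<circ>\<^sub>a x" if "fst (decomp S I x) = ?s" for x
  proof -
    have "adj_inv ?s \<circ>\<^sub>a x = adj_inv ?s \<circ>\<^sub>a (fst (decomp S I x) \<circ>\<^sub>a snd (decomp S I x))"
      by (simp only: decomp_factorization(3))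
    also have "\<dots> = snd (decomp S I x)"
      using that adj_inv_left_cancel[OF nilpotent] by simp
    finally show ?thesis by simp
  qed
  then show "snd (decomp S I a) - snd (decomp S I a') \<in> J"
    using ss two_sided_ideal_diff_adj_left[OF J assms] by simp
qed

lemma bul_cong:
  assumes "a - a' \<in> J" "b - b' \<in> J"
  shows "bul S I a b - bul S I a' b' \<in> J"
  unfolding bul_def decomp_cong(1)[OF assms(1)]
  by (intro two_sided_ideal_diff_adj[OF J] two_sided_ideal_diff_adj_left[OF J]
      decomp_cong(2)[OF assms(1)] assms(2))

lemma binv_cong:
  assumes "a - a' \<in> J"
  shows "binv S I a - binv S I a' \<in> J"
  unfolding binv_eq decomp_cong(1)[OF assms]
  by (intro two_sided_ideal_diff_adj_left[OF J] two_sided_ideal_diff_adj_inv[OF nilpotent J]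
      decomp_cong(2)[OF assms])

lemma tau_cong:
  assumes "y - y' \<in> J"
  shows "tau S I y x - tau S I y' x \<in> J"
proof -
  have "x - x \<in> J" using J unfolding two_sided_ideal_def by simp
  then have bul: "bul S I x y - bul S I x y' \<in> J" using bul_cong assms by blast
  then have "sigma S I x y - sigma S I x y' \<in> J"
    unfolding sigma_def by (simp add: algebra_simps)
  then show ?thesis unfolding tau_def using bul_cong[OF binv_cong bul] by blast
qed

end

end

theorem mainTheorem7:
  fixes S I X J :: "'a::ring set" and k :: "'a \<Rightarrow> 'a"
  assumes "nilpotent_ring TYPE('a)"
    and "subring S" and "two_sided_ideal I"
    and "S \<inter> I = {0}" and "\<forall>x. \<exists>s\<in>S. \<exists>i\<in>I. x = s + i"
    and "ybe_solution X (ybmap S I)"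
    and "two_sided_ideal J" and "J \<subseteq> I \<inter> X"
    and "\<forall>x\<in>X. k x \<in> X" and "\<forall>x\<in>X. k x - x \<in> J"
  shows "\<forall>x\<in>X. \<forall>y\<in>X. tau S I (k y) x - tau S I y x \<in> J"
proof -
  interpret nilpotent_exact_factorization S I
    using assms(1-5) by unfold_locales
  have "J \<subseteq> I" using assms(8) by auto
  then show ?thesis using tau_cong[OF assms(7)] assms(10) by blast
qed

end
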